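(* Let $\beta\colon Y\times Y\to[0,\infty)$ be arbitrary and define the interface velocity $V_{\mathrm{int}}=\{\{v\}\}-\beta[\![p]\!]$. For the semi-discretization described below, choose $$f^\rho=\Big(\{\{\rho\}\}_{\log}-\tfrac12[\![\rho]\!]\operatorname{sign}(V_{\mathrm{int}})\Big)V_{\mathrm{int}},\qquad f^{\rho e}=\frac{1}{\gamma-1}\frac{f^\rho}{\{\{\rho/p\}\}_{\log}}+\{\{p\}\}V_{\mathrm{int}},\qquad v^{\mathrm{num}}=V_{\mathrm{int}},$$ $f^{\rho v}$ any consistent two-point discretization of $\rho v^2+p$, and $\rho^{\mathrm{num}}$ any consistent two-point mean of $\rho$. Then the semi-discretization is entropy-stable for the entropy pair $U=-\rho s$, $F=-\rho sv$, $s=\log(p/\rho^\gamma)$.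
   Context: Let $\gamma>1$. $Y$ is the set of states $(\rho,\rho v,\rho e)$ with $\rho>0$, $p=(\gamma-1)\rho e>0$, $v=\rho v/\rho$; a time-independent gravity potential $\phi_i$ is attached to each cell. The scheme is $\partial_t\rho_i+\frac{f^\rho_{i+1/2}-f^\rho_{i-1/2}}{\Delta x}=0$, $\partial_t(\rho v)_i+\frac{f^{\rho v}_{i+1/2}-f^{\rho v}_{i-1/2}}{\Delta x}+\frac{\rho^{\mathrm{num}}_{i+1/2}[\![\phi]\!]_{i+1/2}+\rho^{\mathrm{num}}_{i-1/2}[\![\phi]\!]_{i-1/2}}{2\Delta x}=0$, $\partial_t(\rho e)_i+\frac{f^{\rho e}_{i+1/2}-f^{\rho e}_{i-1/2}}{\Delta x}-\frac{v^{\mathrm{num}}_{i+1/2}[\![p]\!]_{i+1/2}+v^{\mathrm{num}}_{i-1/2}[\![p]\!]_{i-1/2}}{2\Delta x}=0$, with subscript $i+1/2$ meaning evaluation at $(u_-,u_+)=(u_i,u_{i+1})$. Notation: $\{\{a\}\}=\tfrac12(a_-+a_+)$, $[\![a]\!]=a_+-a_-$, logarithmic mean $\{\{a\}\}_{\log}=[\![a]\!]/[\![\log a]\!]$ if $a_-\ne a_+$, $=a_-$ otherwise. Entropy-stable for $(U,F)$ means: there exists a two-point $F^{\mathrm{num}}$ with $F^{\mathrm{num}}(u,u)=F(u)$ such that for all grid states and all $i$, $U'(u_i)\cdot\partial_tu_i\le-\frac{1}{\Delta x}(F^{\mathrm{num}}(u_i,u_{i+1})-F^{\mathrm{num}}(u_{i-1},u_i))$,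 with $U'$ the gradient with respect to $(\rho,\rho v,\rho e)$. *)

theory Defs
  imports "HOL-Analysis.Analysis"
begin

type_synonym state = "real \<times> real \<times> real"

definition rho :: "state \<Rightarrow> real" where "rho u = fst u"
definition mom :: "state \<Rightarrow> real" where "mom u = fst (snd u)"
definition rhoe :: "state \<Rightarrow> real" where "rhoe u = snd (snd u)"
definition vel :: "state \<Rightarrow> real" where "vel u = mom u / rho u"
definition pres :: "real \<Rightarrow> state \<Rightarrow> real" where "pres \<gamma> u = (\<gamma> - 1) * rhoe u"

definition inY :: "real \<Rightarrow> state \<Rightarrow> bool" where
  "inY \<gamma> u \<longleftrightarrow> rho u > 0 \<and> pres \<gamma> u > 0"

definition avg :: "(state \<Rightarrow> real) \<Rightarrow> state \<Rightarrow> state \<Rightarrow> real" where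
  "avg a ul ur = (a ul + a ur) / 2"
definition jump :: "(state \<Rightarrow> real) \<Rightarrow> state \<Rightarrow> state \<Rightarrow> real" where
  "jump a ul ur = a ur - a ul"
definition logmean :: "real \<Rightarrow> real \<Rightarrow> real" where
  "logmean a b = (if a \<noteq> b then (b - a) / (ln b - ln a) else a)"
definition avglog :: "(state \<Rightarrow> real) \<Rightarrow> state \<Rightarrow> state \<Rightarrow> real" where
  "avglog a ul ur = logmean (a ul) (a ur)"

definition Vint :: "real \<Rightarrow> (state \<Rightarrow> state \<Rightarrow> real) \<Rightarrow> state \<Rightarrow> state \<Rightarrow> real" where
  "Vint \<gamma> \<beta> ul ur = avg vel ul ur - \<beta> ul ur * jump (pres \<gamma>) ul ur"

definition frho :: "real \<Rightarrow> (state \<Rightarrow> state \<Rightarrow> real) \<Rightarrow> state \<Rightarrow> state \<Rightarrow> real" where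
  "frho \<gamma> \<beta> ul ur =
     (avglog rho ul ur - jump rho ul ur * sgn (Vint \<gamma> \<beta> ul ur) / 2) * Vint \<gamma> \<beta> ul ur"

definition frhoe :: "real \<Rightarrow> (state \<Rightarrow> state \<Rightarrow> real) \<Rightarrow> state \<Rightarrow> state \<Rightarrow> real" where
  "frhoe \<gamma> \<beta> ul ur =
     (1 / (\<gamma> - 1)) * (frho \<gamma> \<beta> ul ur / avglog (\<lambda>w. rho w / pres \<gamma> w) ul ur)
     + avg (pres \<gamma>) ul ur * Vint \<gamma> \<beta> ul ur"

text \<open>Semi-discrete right-hand side (value of the time derivative of u_i) for
  generic two-point fluxes fr, fm, fe, density mean rn, velocity vn,
  gravity potential phi and grid state uu, indexed over the integers.\<close>
definition scheme ::
  "real \<Rightarrow> real \<Rightarrow> (state \<Rightarrow> state \<Rightarrow> real) \<Rightarrow> (state \<Rightarrow> state \<Rightarrow> real) \<Rightarrow>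
   (state \<Rightarrow> state \<Rightarrow> real) \<Rightarrow> (state \<Rightarrow> state \<Rightarrow> real) \<Rightarrow> (state \<Rightarrow> state \<Rightarrow> real) \<Rightarrow>
   (int \<Rightarrow> real) \<Rightarrow> (int \<Rightarrow> state) \<Rightarrow> int \<Rightarrow> state" where
  "scheme \<gamma> dx fr fm fe rn vn \<phi> uu i =
    (let ul = uu (i - 1); uc = uu i; ur = uu (i + 1) in
     ( - (fr uc ur - fr ul uc) / dx,
       - (fm uc ur - fm ul uc) / dx
         - (rn uc ur * (\<phi> (i + 1) - \<phi> i) + rn ul uc * (\<phi> i - \<phi> (i - 1))) / (2 * dx),
       - (fe uc ur - fe ul uc) / dx
         + (vn uc ur * jump (pres \<gamma>) uc ur + vn ul uc * jump (pres \<gamma>) ul uc) / (2 * dx)))"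

definition spec_entropy :: "real \<Rightarrow> state \<Rightarrow> real" where
  "spec_entropy \<gamma> u = ln (pres \<gamma> u / rho u powr \<gamma>)"
definition entU :: "real \<Rightarrow> state \<Rightarrow> real" where
  "entU \<gamma> u = - rho u * spec_entropy \<gamma> u"
definition entF :: "real \<Rightarrow> state \<Rightarrow> real" where
  "entF \<gamma> u = - rho u * spec_entropy \<gamma> u * vel u"

text \<open>Entropy stability: U'(u_i) . d/dt u_i is the Frechet derivative of U at u_i
  applied to the right-hand side.\<close>
definition entropy_stable ::
  "real \<Rightarrow> real \<Rightarrow> ((int \<Rightarrow> real) \<Rightarrow> (int \<Rightarrow> state) \<Rightarrow> int \<Rightarrow> state) \<Rightarrow> bool" where
  "entropy_stable \<gamma> dx R \<longleftrightarrow>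
    (\<exists>Fn :: state \<Rightarrow> state \<Rightarrow> real.
       (\<forall>u. inY \<gamma> u \<longrightarrow> Fn u u = entF \<gamma> u) \<and>
       (\<forall>\<phi> uu i. (\<forall>j. inY \<gamma> (uu j)) \<longrightarrow>
          frechet_derivative (entU \<gamma>) (at (uu i)) (R \<phi> uu i)
            \<le> - (Fn (uu i) (uu (i + 1)) - Fn (uu (i - 1)) (uu i)) / dx))"

end

theory Submission
  imports Defs
begin

text \<open>The entropy U = -\<rho> s does not depend on the momentum: its gradient is
  w = (\<gamma> - s, 0, -(\<gamma> - 1) \<rho> / p). Hence the momentum flux and the gravity source
  drop out of U'(u_i) \<cdot> \<partial>_t u_i, which splits into one contribution per interface.
  Taking w(u_-) \<cdot> f - w_3(u_-) V_int [p] / 2 as numerical entropy flux, the entropy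
  production at an interface is [w_1] f^\<rho> + [w_3] f^{\<rho>e} + {{w_3}} [p] V_int. Since [w_3] = -(\<gamma> - 1) [\<rho>/p], the
  logarithmic mean of \<rho>/p in f^{\<rho>e} makes [w_3] f^{\<rho>e} cancel the \<rho>/p-part of
  [w_1] f^\<rho>, and the logarithmic mean of \<rho> in f^\<rho> reduces the rest to
  -(\<gamma> - 1)/2 [ln \<rho>] [\<rho>] |V_int| \<le> 0, whatever the sign of \<beta>.\<close>

lemma logmean_pos:
  assumes "a > 0" "b > 0"
  shows "logmean a b > 0"
proof (cases a b rule: linorder_cases)
  case less
  then show ?thesis using assms by (simp add: logmean_def)
next
  case greater
  then have "ln b < ln a" using assms by simp
  then show ?thesis using greater by (simp add: logmean_def divide_neg_neg)
qed (use assms in \<open>simp add: logmean_def\<close>)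

lemma ln_diff_mult_logmean:
  assumes "a > 0" "b > 0"
  shows "(ln b - ln a) * logmean a b = b - a"
proof (cases "a = b")
  case False
  then have "ln b \<noteq> ln a" using assms by simp
  then show ?thesis using False by (simp add: logmean_def)
qed (simp add: logmean_def)

lemma ln_diff_mult_diff_nonneg:
  fixes a b :: real
  assumes "a > 0" "b > 0"
  shows "(ln b - ln a) * (b - a) \<ge> 0"
  using assms by (cases "a \<le> b") (auto intro: mult_nonneg_nonneg mult_nonpos_nonpos)

lemma interface_entropy_production_eq:
  fixes \<gamma> \<rho>L \<rho>R pL pR V fr fe :: real
  assumes "\<gamma> \<noteq> 1" "\<rho>L > 0" "\<rho>R > 0" "pL > 0" "pR > 0"
    and fr_def: "fr = (logmean \<rho>L \<rho>R - (\<rho>R - \<rho>L) * sgn V / 2) * V"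
    and fe_def: "fe = 1 / (\<gamma> - 1) * (fr / logmean (\<rho>L / pL) (\<rho>R / pR)) + (pL + pR) / 2 * V"
  defines "w1L \<equiv> \<gamma> - ln (pL / \<rho>L powr \<gamma>)" and "w1R \<equiv> \<gamma> - ln (pR / \<rho>R powr \<gamma>)"
    and "w3L \<equiv> - (\<gamma> - 1) * \<rho>L / pL" and "w3R \<equiv> - (\<gamma> - 1) * \<rho>R / pR"
  shows "(w1R - w1L) * fr + (w3R - w3L) * fe + (w3L + w3R) / 2 * (pR - pL) * V
    = - (\<gamma> - 1) / 2 * ((ln \<rho>R - ln \<rho>L) * (\<rho>R - \<rho>L)) * \<bar>V\<bar>"
proof -
  define a where "a = ln \<rho>R - ln \<rho>L"
  define b where "b = ln (\<rho>R / pR) - ln (\<rho>L / pL)"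
  define lb where "lb = logmean (\<rho>L / pL) (\<rho>R / pR)"
  have "\<rho>L / pL > 0" "\<rho>R / pR > 0" using assms by auto
  then have lb_pos: "lb > 0" and b_lb: "b * lb = \<rho>R / pR - \<rho>L / pL"
    unfolding lb_def b_def by (simp_all add: logmean_pos ln_diff_mult_logmean)
  have "a * fr = (a * logmean \<rho>L \<rho>R) * V - a * (\<rho>R - \<rho>L) * (sgn V * V) / 2"
    by (simp add: fr_def algebra_simps)
  then have a_fr: "a * fr = (\<rho>R - \<rho>L) * V - a * (\<rho>R - \<rho>L) * \<bar>V\<bar> / 2"
    using ln_diff_mult_logmean[of \<rho>L \<rho>R] assms(2,3) by (simp add: a_def abs_sgn)
  have w1_jump: "w1R - w1L = b + (\<gamma> - 1) * a"
    unfolding w1L_def w1R_def a_def b_def using assms by (simp add: ln_div ln_powr algebra_simps)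
  have w3_jump: "w3R - w3L = - (\<gamma> - 1) * (b * lb)"
    unfolding b_lb w3L_def w3R_def using assms(4,5) by (simp add: field_simps)
  have w3_p_jump: "(w3R - w3L) * (pL + pR) / 2 + (w3L + w3R) / 2 * (pR - pL) = - (\<gamma> - 1) * (\<rho>R - \<rho>L)"
    unfolding w3L_def w3R_def using assms by (simp add: field_simps)
  have w3_fe: "(w3R - w3L) * fe = - b * fr + (w3R - w3L) * (pL + pR) / 2 * V"
    unfolding fe_def w3_jump using assms lb_pos by (simp add: lb_def[symmetric] field_simps)
  have "(w1R - w1L) * fr + (w3R - w3L) * fe + (w3L + w3R) / 2 * (pR - pL) * V
      = (\<gamma> - 1) * a * fr + ((w3R - w3L) * (pL + pR) / 2 + (w3L + w3R) / 2 * (pR - pL)) * V"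
    unfolding w1_jump w3_fe by (simp add: algebra_simps)
  also have "\<dots> = (\<gamma> - 1) * (a * fr - (\<rho>R - \<rho>L) * V)"
    unfolding w3_p_jump by (simp add: algebra_simps)
  also have "\<dots> = - (\<gamma> - 1) / 2 * (a * (\<rho>R - \<rho>L)) * \<bar>V\<bar>"
    unfolding a_fr by (simp add: field_simps)
  finally show ?thesis unfolding a_def .
qed

definition entropy_var_rho :: "real \<Rightarrow> state \<Rightarrow> real" where
  "entropy_var_rho \<gamma> u = \<gamma> - spec_entropy \<gamma> u"

definition entropy_var_energy :: "real \<Rightarrow> state \<Rightarrow> real" where
  "entropy_var_energy \<gamma> u = - (\<gamma> - 1) * rho u / pres \<gamma> u"

lemma has_derivative_entU:
  assumes "inY \<gamma> u"
  shows "(entU \<gamma> has_derivative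
    (\<lambda>h. entropy_var_rho \<gamma> u * fst h + entropy_var_energy \<gamma> u * snd (snd h))) (at u)"
proof -
  obtain r m e where u: "u = (r, m, e)" by (cases u)
  have r: "r > 0" and p: "(\<gamma> - 1) * e > 0"
    using assms by (simp_all add: u inY_def rho_def pres_def rhoe_def)
  then have p_nonzero: "\<gamma> * e - e \<noteq> 0" by (auto simp: algebra_simps)
  have entU_eq: "entU \<gamma> = (\<lambda>u. - fst u * ln ((\<gamma> - 1) * snd (snd u) / fst u powr \<gamma>))"
    by (simp add: fun_eq_iff entU_def spec_entropy_def rho_def pres_def rhoe_def)
  show ?thesis
    unfolding entU_eq u
    by (rule derivative_eq_intros refl | use r p in \<open>simp; fail\<close>)+
       (use r p_nonzero in \<open>auto simp: fun_eq_iff entropy_var_rho_def entropy_var_energy_def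
          spec_entropy_def rho_def pres_def rhoe_def powr_diff field_simps\<close>)
qed

definition entropy_flux_left ::
  "real \<Rightarrow> (state \<Rightarrow> state \<Rightarrow> real) \<Rightarrow> (state \<Rightarrow> state \<Rightarrow> real) \<Rightarrow>
   (state \<Rightarrow> state \<Rightarrow> real) \<Rightarrow> state \<Rightarrow> state \<Rightarrow> real" where
  "entropy_flux_left \<gamma> fr fe vn ul ur =
     entropy_var_rho \<gamma> ul * fr ul ur + entropy_var_energy \<gamma> ul * fe ul ur
     - entropy_var_energy \<gamma> ul * vn ul ur * jump (pres \<gamma>) ul ur / 2"

definition entropy_flux_right ::
  "real \<Rightarrow> (state \<Rightarrow> state \<Rightarrow> real) \<Rightarrow> (state \<Rightarrow> state \<Rightarrow> real) \<Rightarrow>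
   (state \<Rightarrow> state \<Rightarrow> real) \<Rightarrow> state \<Rightarrow> state \<Rightarrow> real" where
  "entropy_flux_right \<gamma> fr fe vn ul ur =
     entropy_var_rho \<gamma> ur * fr ul ur + entropy_var_energy \<gamma> ur * fe ul ur
     + entropy_var_energy \<gamma> ur * vn ul ur * jump (pres \<gamma>) ul ur / 2"

lemma entropy_rate_scheme:
  assumes "inY \<gamma> (uu i)" and "dx \<noteq> 0"
  shows "frechet_derivative (entU \<gamma>) (at (uu i)) (scheme \<gamma> dx fr fm fe rn vn \<phi> uu i)
    = (entropy_flux_right \<gamma> fr fe vn (uu (i - 1)) (uu i)
       - entropy_flux_left \<gamma> fr fe vn (uu i) (uu (i + 1))) / dx"
  unfolding frechet_derivative_at[OF has_derivative_entU[OF assms(1)], symmetric]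
  using assms(2)
  by (simp add: scheme_def Let_def entropy_flux_left_def entropy_flux_right_def field_simps)

lemma entropy_flux_left_consistent:
  assumes "\<gamma> \<noteq> 1" and "inY \<gamma> u"
  shows "entropy_flux_left \<gamma> (frho \<gamma> \<beta>) (frhoe \<gamma> \<beta>) (Vint \<gamma> \<beta>) u u = entF \<gamma> u"
proof -
  have r: "rho u > 0" and p: "pres \<gamma> u > 0" using assms(2) by (auto simp: inY_def)
  have V: "Vint \<gamma> \<beta> u u = vel u" by (simp add: Vint_def avg_def jump_def)
  have fr: "frho \<gamma> \<beta> u u = rho u * vel u"
    by (simp add: frho_def V avglog_def logmean_def jump_def)
  have fe: "frhoe \<gamma> \<beta> u u = (1 / (\<gamma> - 1) + 1) * pres \<gamma> u * vel u"
    using r p by (simp add: frhoe_def fr V avglog_def logmean_def avg_def field_simps)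
  show ?thesis
    using r p assms(1)
    by (simp add: entropy_flux_left_def fr fe V entropy_var_rho_def entropy_var_energy_def
        entF_def jump_def field_simps)
qed

lemma entropy_flux_right_le_left:
  assumes "\<gamma> > 1" and "inY \<gamma> ul" and "inY \<gamma> ur"
  shows "entropy_flux_right \<gamma> (frho \<gamma> \<beta>) (frhoe \<gamma> \<beta>) (Vint \<gamma> \<beta>) ul ur
    \<le> entropy_flux_left \<gamma> (frho \<gamma> \<beta>) (frhoe \<gamma> \<beta>) (Vint \<gamma> \<beta>) ul ur"
proof -
  have pos: "rho ul > 0" "rho ur > 0" "pres \<gamma> ul > 0" "pres \<gamma> ur > 0"
    using assms(2,3) by (auto simp: inY_def)
  let ?fr = "frho \<gamma> \<beta> ul ur" and ?fe = "frhoe \<gamma> \<beta> ul ur" and ?V = "Vint \<gamma> \<beta> ul ur"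
  have "entropy_flux_right \<gamma> (frho \<gamma> \<beta>) (frhoe \<gamma> \<beta>) (Vint \<gamma> \<beta>) ul ur
      - entropy_flux_left \<gamma> (frho \<gamma> \<beta>) (frhoe \<gamma> \<beta>) (Vint \<gamma> \<beta>) ul ur
    = (entropy_var_rho \<gamma> ur - entropy_var_rho \<gamma> ul) * ?fr
      + (entropy_var_energy \<gamma> ur - entropy_var_energy \<gamma> ul) * ?fe
      + (entropy_var_energy \<gamma> ul + entropy_var_energy \<gamma> ur) / 2
        * (pres \<gamma> ur - pres \<gamma> ul) * ?V"
    by (simp add: entropy_flux_left_def entropy_flux_right_def jump_def field_simps)
  also have "\<dots> = - (\<gamma> - 1) / 2 * ((ln (rho ur) - ln (rho ul)) * (rho ur - rho ul)) * \<bar>?V\<bar>"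
    unfolding entropy_var_rho_def entropy_var_energy_def spec_entropy_def
    using assms(1)
    by (intro interface_entropy_production_eq pos)
      (simp_all add: frho_def frhoe_def avglog_def avg_def jump_def)
  also have "\<dots> \<le> 0"
    using assms(1) ln_diff_mult_diff_nonneg[OF pos(1,2)]
    by (intro mult_nonpos_nonneg) auto
  finally show ?thesis by simp
qed

theorem mainTheorem13:
  fixes \<gamma> dx :: real
    and \<beta> fm rn :: "state \<Rightarrow> state \<Rightarrow> real"
  assumes "\<gamma> > 1" and "dx > 0"
    and "\<forall>u w. inY \<gamma> u \<longrightarrow> inY \<gamma> w \<longrightarrow> \<beta> u w \<ge> 0"
    and "\<forall>u. inY \<gamma> u \<longrightarrow> fm u u = rho u * (vel u)\<^sup>2 + pres \<gamma> u"
    and "\<forall>u. inY \<gamma> u \<longrightarrow> rn u u = rho u"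
  shows "entropy_stable \<gamma> dx
           (scheme \<gamma> dx (frho \<gamma> \<beta>) fm (frhoe \<gamma> \<beta>) rn (Vint \<gamma> \<beta>))"
proof -
  let ?Fl = "entropy_flux_left \<gamma> (frho \<gamma> \<beta>) (frhoe \<gamma> \<beta>) (Vint \<gamma> \<beta>)"
  let ?Fr = "entropy_flux_right \<gamma> (frho \<gamma> \<beta>) (frhoe \<gamma> \<beta>) (Vint \<gamma> \<beta>)"
  have "frechet_derivative (entU \<gamma>) (at (uu i))
      (scheme \<gamma> dx (frho \<gamma> \<beta>) fm (frhoe \<gamma> \<beta>) rn (Vint \<gamma> \<beta>) \<phi> uu i)
    \<le> - (?Fl (uu i) (uu (i + 1)) - ?Fl (uu (i - 1)) (uu i)) / dx"
    if "\<forall>j. inY \<gamma> (uu j)" for \<phi> uu i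
  proof -
    have "?Fr (uu (i - 1)) (uu i) \<le> ?Fl (uu (i - 1)) (uu i)"
      using entropy_flux_right_le_left assms(1) that by blast
    then show ?thesis
      using entropy_rate_scheme[of \<gamma> uu i dx] assms(2) that
      by (simp add: divide_right_mono)
  qed
  moreover have "?Fl u u = entF \<gamma> u" if "inY \<gamma> u" for u
    using entropy_flux_left_consistent assms(1) that by simp
  ultimately show ?thesis
    unfolding entropy_stable_def by blast
qed

end
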